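(* Let $G$ be a group with multiplication $\mu$ and neutral element $e$, acting partially on a set $X$ via subsets $X_g\subseteq X$ and bijections $\alpha_g:X_{g^{-1}}\to X_g$ ($g\in G$). Put $G\bullet X=\{(g,x)\in G\times X\mid x\in X_{g^{-1}}\}$, let $\iota:G\bullet X\to G\times X$ be the inclusion and $\alpha:G\bullet X\to X$, $\alpha(g,x)=\alpha_g(x)$. On $G\times X$ define $(g,x)\sim(h,y)$ iff $(h^{-1}g,x)\in G\bullet X$ and $\alpha(h^{-1}g,x)=y$. Then the quotient set $Y=(G\times X)/\!\sim$, with the canonical projection $G\times X\to Y$, $(g,x)\mapsto[g,x]$, is the coequalizer in $\mathsf{Set}$ of the pair of maps $$G\times\alpha,\ \ (\mu\times X)\circ(G\times\iota)\ :\ G\times(G\bullet X)\longrightarrow G\times X.$$ Consequently, the globalization of this partial action is given exactly by this coequalizer.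
   Context: A partial action of a group $G$ on a set $X$ consists of subsets $X_g\subseteq X$ and bijections $\alpha_g:X_{g^{-1}}\to X_g$ for $g\in G$ such that $X_e=X$, $\alpha_e=\mathrm{id}_X$, and for all $g,h\in G$ and $x\in X_{h^{-1}}$ with $\alpha_h(x)\in X_{g^{-1}}$ one has $x\in X_{(gh)^{-1}}$ and $\alpha_{gh}(x)=\alpha_g(\alpha_h(x))$. It is known that $\sim$ is an equivalence relation and that $Y=(G\times X)/\!\sim$ with the global action $h\cdot[g,x]=[hg,x]$ is the globalization (enveloping action) of the partial action, i.e. the smallest $G$-set containing $X$ such that the partial action is the restriction of the global one. *)

theory Defs
  imports "HOL-Algebra.Group" "HOL-Library.FuncSet"
begin

definition partial_action ::
  "('g, 'm) monoid_scheme \<Rightarrow> 'x set \<Rightarrow> ('g \<Rightarrow> 'x set) \<Rightarrow> ('g \<Rightarrow> 'x \<Rightarrow> 'x) \<Rightarrow> bool" where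
  "partial_action G X D act \<longleftrightarrow>
     (\<forall>g\<in>carrier G. D g \<subseteq> X) \<and>
     (\<forall>g\<in>carrier G. bij_betw (act g) (D (inv\<^bsub>G\<^esub> g)) (D g)) \<and>
     D \<one>\<^bsub>G\<^esub> = X \<and>
     (\<forall>x\<in>X. act \<one>\<^bsub>G\<^esub> x = x) \<and>
     (\<forall>g\<in>carrier G. \<forall>h\<in>carrier G. \<forall>x\<in>D (inv\<^bsub>G\<^esub> h).
        act h x \<in> D (inv\<^bsub>G\<^esub> g) \<longrightarrow>
          x \<in> D (inv\<^bsub>G\<^esub> (g \<otimes>\<^bsub>G\<^esub> h)) \<and> act (g \<otimes>\<^bsub>G\<^esub> h) x = act g (act h x))"

definition pdom :: "('g, 'm) monoid_scheme \<Rightarrow> 'x set \<Rightarrow> ('g \<Rightarrow> 'x set) \<Rightarrow> ('g \<times> 'x) set" where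
  "pdom G X D = {(g, x). g \<in> carrier G \<and> x \<in> X \<and> x \<in> D (inv\<^bsub>G\<^esub> g)}"

definition glob_rel ::
  "('g, 'm) monoid_scheme \<Rightarrow> 'x set \<Rightarrow> ('g \<Rightarrow> 'x set) \<Rightarrow> ('g \<Rightarrow> 'x \<Rightarrow> 'x) \<Rightarrow> (('g \<times> 'x) \<times> ('g \<times> 'x)) set" where
  "glob_rel G X D act = {((g, x), (h, y)). (g, x) \<in> carrier G \<times> X \<and> (h, y) \<in> carrier G \<times> X \<and>
      (inv\<^bsub>G\<^esub> h \<otimes>\<^bsub>G\<^esub> g, x) \<in> pdom G X D \<and> act (inv\<^bsub>G\<^esub> h \<otimes>\<^bsub>G\<^esub> g) x = y}"

text \<open>The universal property is
  tested against all sets C of an arbitrary type 'c (the type is universally quantified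
  at the theorem level). Maps out of Q are taken extensional so that uniqueness is meaningful.\<close>
definition is_coequalizer ::
  "'a set \<Rightarrow> 'b set \<Rightarrow> ('a \<Rightarrow> 'b) \<Rightarrow> ('a \<Rightarrow> 'b) \<Rightarrow> 'q set \<Rightarrow> ('b \<Rightarrow> 'q) \<Rightarrow> 'c itself \<Rightarrow> bool" where
  "is_coequalizer A B f g Q q _ \<longleftrightarrow>
     f \<in> A \<rightarrow> B \<and> g \<in> A \<rightarrow> B \<and> q \<in> B \<rightarrow> Q \<and>
     (\<forall>a\<in>A. q (f a) = q (g a)) \<and>
     (\<forall>(C :: 'c set) h. h \<in> B \<rightarrow> C \<and> (\<forall>a\<in>A. h (f a) = h (g a)) \<longrightarrow>
        (\<exists>!u. u \<in> Q \<rightarrow>\<^sub>E C \<and> (\<forall>b\<in>B. u (q b) = h b)))"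

end

theory Submission
  imports Defs
begin

text \<open>The relation \<open>\<sim>\<close> is exactly the image of the pair
  \<open>\<langle>(\<mu> \<times> X) \<circ> (G \<times> \<iota>), G \<times> \<alpha>\<rangle>\<close>: \<open>(g, x) \<sim> (h, y)\<close> says precisely that
  \<open>(g, x) = (h \<cdot> (h\<inverse> g), x)\<close> and \<open>y = \<alpha>\<^bsub>h\<inverse> g\<^esub>(x)\<close>. Hence a map out of \<open>G \<times> X\<close>
  coequalizes the pair iff it is constant on \<open>\<sim>\<close>-classes. Since the partial action axioms make
  \<open>\<sim>\<close> an equivalence relation already, no closure needs to be taken, and the quotient by \<open>\<sim>\<close>
  is the coequalizer.\<close>

lemma quotient_extensional_factor_unique:
  assumes "equiv B R" and "h \<in> B \<rightarrow> C" and "h respects R"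
  shows "\<exists>!u. u \<in> B // R \<rightarrow>\<^sub>E C \<and> (\<forall>b\<in>B. u (R `` {b}) = h b)"
proof
  define u where "u = (\<lambda>Y \<in> B // R. the_elem (h ` Y))"
  have u_class: "u (R `` {b}) = h b" if "b \<in> B" for b
  proof -
    have "the_elem (h ` (R `` {b})) = h b"
    proof (rule the_elem_image_unique)
      show "R `` {b} \<noteq> {}" using equiv_class_self[OF assms(1) that] by blast
      show "h y = h b" if "y \<in> R `` {b}" for y
        using that assms(3) by (auto simp: congruent_def)
    qed
    then show ?thesis using that by (simp add: u_def quotientI)
  qed
  show "u \<in> B // R \<rightarrow>\<^sub>E C \<and> (\<forall>b\<in>B. u (R `` {b}) = h b)"
  proof (intro conjI ballI PiE_I)
    show "u Y \<in> C" if "Y \<in> B // R" for Y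
      using that assms(2) u_class by (auto elim!: quotientE)
    show "u Y = undefined" if "Y \<notin> B // R" for Y
      using that by (simp add: u_def)
  qed (use u_class in blast)
  fix v assume v: "v \<in> B // R \<rightarrow>\<^sub>E C \<and> (\<forall>b\<in>B. v (R `` {b}) = h b)"
  show "v = u"
  proof (rule extensionalityI)
    show "v \<in> extensional (B // R)" "u \<in> extensional (B // R)" using v by (auto simp: u_def PiE_def)
  next
    fix Y assume "Y \<in> B // R"
    then show "v Y = u Y" using v u_class by (auto elim!: quotientE)
  qed
qed

lemma quotient_is_coequalizer:
  assumes "equiv B R" and "R = (\<lambda>a. (g a, f a)) ` A"
  shows "is_coequalizer A B f g (B // R) (\<lambda>b. R `` {b}) TYPE('c)"
  unfolding is_coequalizer_def
proof (intro conjI allI impI)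
  have pair_in_R: "(g a, f a) \<in> R" if "a \<in> A" for a
    using assms(2) that by blast
  then show "f \<in> A \<rightarrow> B" "g \<in> A \<rightarrow> B"
    using equiv_type[OF assms(1)] by blast+
  show "(\<lambda>b. R `` {b}) \<in> B \<rightarrow> B // R"
    by (auto intro: quotientI)
  show "\<forall>a\<in>A. R `` {f a} = R `` {g a}"
    using equiv_class_eq[OF assms(1) pair_in_R] by simp
  fix C :: "'c set" and h
  assume h: "h \<in> B \<rightarrow> C \<and> (\<forall>a\<in>A. h (f a) = h (g a))"
  then have "h respects R"
    using assms(2) by (auto simp: congruent_def)
  with assms(1) h show "\<exists>!u. u \<in> B // R \<rightarrow>\<^sub>E C \<and> (\<forall>b\<in>B. u (R `` {b}) = h b)"
    by (intro quotient_extensional_factor_unique) blast+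
qed

context
  fixes G (structure) and X :: "'x set" and D :: "'g \<Rightarrow> 'x set" and act :: "'g \<Rightarrow> 'x \<Rightarrow> 'x"
  assumes group: "group G" and pa: "partial_action G X D act"
begin

lemma partial_action_domain_subset: "g \<in> carrier G \<Longrightarrow> D g \<subseteq> X"
  using pa by (simp add: partial_action_def)

lemma partial_action_domain_mem:
  assumes "g \<in> carrier G" "x \<in> D (inv g)"
  shows "x \<in> X"
proof -
  interpret group G by (rule group)
  show ?thesis using assms partial_action_domain_subset[of "inv g"] by auto
qed

lemma partial_action_act_in_domain: "g \<in> carrier G \<Longrightarrow> x \<in> D (inv g) \<Longrightarrow> act g x \<in> D g"
  using pa by (auto simp: partial_action_def dest: bij_betw_apply)

lemma partial_action_one_domain: "D \<one> = X"
  using pa by (simp add: partial_action_def)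

lemma partial_action_one_act: "x \<in> X \<Longrightarrow> act \<one> x = x"
  using pa by (simp add: partial_action_def)

lemma partial_action_compose:
  assumes "g \<in> carrier G" "h \<in> carrier G" "x \<in> D (inv h)" "act h x \<in> D (inv g)"
  shows "x \<in> D (inv (g \<otimes> h))" "act (g \<otimes> h) x = act g (act h x)"
  using pa assms unfolding partial_action_def by blast+

lemma partial_action_act_inv:
  assumes "g \<in> carrier G" "x \<in> D (inv g)"
  shows "act (inv g) (act g x) = x"
proof -
  interpret group G by (rule group)
  have "act g x \<in> D (inv (inv g))"
    using assms partial_action_act_in_domain by simp
  then have "act (inv g) (act g x) = act (inv g \<otimes> g) x"
    using assms partial_action_compose(2)[of "inv g" g x] by simp
  also have "\<dots> = x"
    using assms partial_action_domain_mem by (simp add: partial_action_one_act)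
  finally show ?thesis .
qed

lemma mem_pdom_iff: "(g, x) \<in> pdom G X D \<longleftrightarrow> g \<in> carrier G \<and> x \<in> D (inv g)"
  using partial_action_domain_mem by (auto simp: pdom_def)

lemma mem_glob_rel_iff:
  "((g, x), (h, y)) \<in> glob_rel G X D act \<longleftrightarrow>
     g \<in> carrier G \<and> h \<in> carrier G \<and> x \<in> D (inv (inv h \<otimes> g)) \<and> act (inv h \<otimes> g) x = y"
proof -
  interpret group G by (rule group)
  have "x \<in> X \<and> act (inv h \<otimes> g) x \<in> X"
    if "g \<in> carrier G" "h \<in> carrier G" "x \<in> D (inv (inv h \<otimes> g))"
    using that partial_action_domain_mem[of "inv h \<otimes> g"]
      partial_action_act_in_domain[of "inv h \<otimes> g"] partial_action_domain_subset[of "inv h \<otimes> g"]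
    by auto
  then show ?thesis
    by (auto simp: glob_rel_def mem_pdom_iff)
qed

lemma glob_rel_equiv: "equiv (carrier G \<times> X) (glob_rel G X D act)"
proof -
  interpret group G by (rule group)
  show ?thesis
  proof (rule equivI)
    show "glob_rel G X D act \<subseteq> (carrier G \<times> X) \<times> (carrier G \<times> X)"
      unfolding glob_rel_def by auto
    show "refl_on (carrier G \<times> X) (glob_rel G X D act)"
      by (rule refl_onI)
        (auto simp: mem_glob_rel_iff partial_action_one_domain partial_action_one_act)
    show "sym (glob_rel G X D act)"
    proof (rule symI, clarify)
      fix g x h y
      assume "((g, x), (h, y)) \<in> glob_rel G X D act"
      then have g: "g \<in> carrier G" and h: "h \<in> carrier G"
        and x: "x \<in> D (inv (inv h \<otimes> g))" and y: "y = act (inv h \<otimes> g) x"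
        by (simp_all add: mem_glob_rel_iff)
      have inv_m: "inv (inv h \<otimes> g) = inv g \<otimes> h"
        using g h by (simp add: inv_mult_group)
      have "y \<in> D (inv (inv g \<otimes> h))"
        using partial_action_act_in_domain[of "inv h \<otimes> g" x] g h x y
        by (simp add: inv_m[symmetric])
      moreover have "act (inv g \<otimes> h) y = x"
        using partial_action_act_inv[of "inv h \<otimes> g" x] g h x y by (simp add: inv_m)
      ultimately show "((h, y), (g, x)) \<in> glob_rel G X D act"
        using g h by (simp add: mem_glob_rel_iff)
    qed
    show "trans (glob_rel G X D act)"
    proof (rule transI, clarify)
      fix g x h y k z
      assume "((g, x), (h, y)) \<in> glob_rel G X D act" "((h, y), (k, z)) \<in> glob_rel G X D act"
      then have g: "g \<in> carrier G" and h: "h \<in> carrier G" and k: "k \<in> carrier G"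
        and x: "x \<in> D (inv (inv h \<otimes> g))" and y: "y = act (inv h \<otimes> g) x"
        and y': "y \<in> D (inv (inv k \<otimes> h))" and z: "z = act (inv k \<otimes> h) y"
        by (simp_all add: mem_glob_rel_iff)
      have "(inv k \<otimes> h) \<otimes> (inv h \<otimes> g) = inv k \<otimes> g"
        using g h k by (simp add: m_assoc[symmetric]) (simp add: m_assoc)
      then show "((g, x), (k, z)) \<in> glob_rel G X D act"
        using partial_action_compose[of "inv k \<otimes> h" "inv h \<otimes> g" x] g h k x y y' z
        by (simp add: mem_glob_rel_iff)
    qed
  qed
qed

lemma glob_rel_eq_image:
  "glob_rel G X D act = (\<lambda>(k, g, x). ((k \<otimes> g, x), (k, act g x))) ` (carrier G \<times> pdom G X D)"
proof -
  interpret group G by (rule group)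
  have cancel: "inv k \<otimes> (k \<otimes> g) = g" if "k \<in> carrier G" "g \<in> carrier G" for k g
    using that by (simp add: m_assoc[symmetric])
  have regroup: "h \<otimes> (inv h \<otimes> g) = g" if "h \<in> carrier G" "g \<in> carrier G" for h g
    using that by (simp add: m_assoc[symmetric])
  show ?thesis
  proof (intro equalityI subsetI)
    fix p assume "p \<in> glob_rel G X D act"
    then obtain g x h y where p: "p = ((g, x), (h, y))" and g: "g \<in> carrier G" and h: "h \<in> carrier G"
        and x: "x \<in> D (inv (inv h \<otimes> g))" and y: "y = act (inv h \<otimes> g) x"
      unfolding glob_rel_def by (auto simp: pdom_def)
    then have "(h, inv h \<otimes> g, x) \<in> carrier G \<times> pdom G X D"
      by (simp add: mem_pdom_iff)
    then show "p \<in> (\<lambda>(k, g, x). ((k \<otimes> g, x), (k, act g x))) ` (carrier G \<times> pdom G X D)"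
      using p y regroup[OF h g] by force
  next
    fix p assume "p \<in> (\<lambda>(k, g, x). ((k \<otimes> g, x), (k, act g x))) ` (carrier G \<times> pdom G X D)"
    then show "p \<in> glob_rel G X D act"
      by (auto simp: mem_pdom_iff mem_glob_rel_iff cancel)
  qed
qed

end

theorem proposition3p4:
  fixes G (structure) and X :: "'x set" and D :: "'g \<Rightarrow> 'x set" and act :: "'g \<Rightarrow> 'x \<Rightarrow> 'x"
  assumes "group G"
    and "partial_action G X D act"
  shows "is_coequalizer
           (carrier G \<times> pdom G X D)
           (carrier G \<times> X)
           (\<lambda>(k, (g, x)). (k, act g x))
           (\<lambda>(k, (g, x)). (k \<otimes> g, x))
           ((carrier G \<times> X) // glob_rel G X D act)
           (\<lambda>p. glob_rel G X D act `` {p})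
           TYPE('c)"
proof (rule quotient_is_coequalizer)
  show "equiv (carrier G \<times> X) (glob_rel G X D act)"
    using assms by (rule glob_rel_equiv)
  show "glob_rel G X D act =
      (\<lambda>a. ((\<lambda>(k, g, x). (k \<otimes> g, x)) a, (\<lambda>(k, g, x). (k, act g x)) a)) ` (carrier G \<times> pdom G X D)"
    using glob_rel_eq_image[OF assms] by (simp add: case_prod_beta')
qed

end
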